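(* Let $(X,\Sigma)$ be a measurable space, $(\mathcal{E}_t)_{t\ge0}$ a process of pavings, $\boldsymbol{\mu}=(\mu_t)_{t\ge0}$ a family of monotone measures on $\Sigma$, and $\mathscr{A}=\{\mathsf{A}_t(\cdot|E)\colon E\in\mathcal{E}_t,\,t\ge0\}$ a parametric family of conditional aggregation operators. Let $c>0$ and $D\in\Sigma$ be such that, for every $t\in[0,c]$, $D\in\mathcal{E}_t^0$, $\sup_{E\in\mathcal{E}_t}\mu_t(E)=\mu_t(D)$ and $\mathsf{A}_t(\mathbf{1}_D|D)\ge t$. Then $\boldsymbol{\mu}_{\mathscr{A}}(\mathbf{1}_D,t)=\mu_t(D)$ for every $t\in[0,c]$.
   Context: $\Sigma^0=\Sigma\setminus\{\emptyset\}$. $\mathbf{F}$ denotes the set of all $\Sigma$-measurable, nonnegative, bounded functions $f\colon X\to[0,\infty)$. A monotone measure is a map $\mu\colon\Sigma\to[0,\infty]$ with $\mu(B)\le\mu(C)$ whenever $B\subseteq C$, $\mu(\emptyset)=0$ and $\mu(X)>0$. For $E\in\Sigma^0$, a conditional aggregation operator (CAO) w.r.t. $E$ is a map $\mathsf{A}(\cdot|E)\colon\mathbf{F}\to[0,\infty]$ such that (C1) $\mathsf{A}(f|E)\le\mathsf{A}(g|E)$ whenever $f(x)\le g(x)$ for all $x\in E$, and (C2) $\mathsf{A}(\mathbf{1}_{X\setminus E}|E)=0$. A process of pavings is a family $(\mathcal{E}_t)_{t\ge0}$ with $\emptyset\in\mathcal{E}_t\subseteq\Sigma$ for all $t$; $\mathcal{E}_t^0=\mathcal{E}_t\setminus\{\emptyset\}$.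 A parametric family of CAOs (pFCA) $\{\mathsf{A}_t(\cdot|E)\colon E\in\mathcal{E}_t,\,t\ge0\}$ consists of CAOs $\mathsf{A}_t(\cdot|E)$ w.r.t. $E$ for each $t$ and $E\in\mathcal{E}_t^0$, with the convention $\mathsf{A}_t(\cdot|\emptyset)=\infty$. The generalized level measure is $\boldsymbol{\mu}_{\mathscr{A}}(f,t)=\sup\{\mu_t(E)\colon \mathsf{A}_t(f|E)\ge t,\ E\in\mathcal{E}_t\}$ for $t\ge0$. *)

theory Defs
  imports "HOL-Analysis.Analysis"
begin

definition Fset :: "'a measure \<Rightarrow> ('a \<Rightarrow> real) set" where
  "Fset M = {f. f \<in> borel_measurable M \<and> (\<forall>x\<in>space M. 0 \<le> f x) \<and> bounded (f ` space M)}"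

definition monotone_measure :: "'a measure \<Rightarrow> ('a set \<Rightarrow> ennreal) \<Rightarrow> bool" where
  "monotone_measure M \<mu> \<longleftrightarrow>
     (\<forall>B\<in>sets M. \<forall>C\<in>sets M. B \<subseteq> C \<longrightarrow> \<mu> B \<le> \<mu> C) \<and> \<mu> {} = 0 \<and> \<mu> (space M) > 0"

definition CAO :: "'a measure \<Rightarrow> 'a set \<Rightarrow> (('a \<Rightarrow> real) \<Rightarrow> ennreal) \<Rightarrow> bool" where
  "CAO M E A \<longleftrightarrow> E \<in> sets M \<and> E \<noteq> {} \<and>
     (\<forall>f\<in>Fset M. \<forall>g\<in>Fset M. (\<forall>x\<in>E. f x \<le> g x) \<longrightarrow> A f \<le> A g) \<and>
     A (indicator (space M - E)) = 0"

definition paving_process :: "'a measure \<Rightarrow> (real \<Rightarrow> 'a set set) \<Rightarrow> bool" where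
  "paving_process M \<E> \<longleftrightarrow> (\<forall>t\<ge>0. {} \<in> \<E> t \<and> \<E> t \<subseteq> sets M)"

definition pFCA :: "'a measure \<Rightarrow> (real \<Rightarrow> 'a set set) \<Rightarrow>
    (real \<Rightarrow> 'a set \<Rightarrow> ('a \<Rightarrow> real) \<Rightarrow> ennreal) \<Rightarrow> bool" where
  "pFCA M \<E> Agg \<longleftrightarrow> (\<forall>t\<ge>0. \<forall>E\<in>\<E> t - {{}}. CAO M E (Agg t E))"

definition agg_conv :: "(real \<Rightarrow> 'a set \<Rightarrow> ('a \<Rightarrow> real) \<Rightarrow> ennreal) \<Rightarrow> real \<Rightarrow> 'a set \<Rightarrow> ('a \<Rightarrow> real) \<Rightarrow> ennreal" where
  "agg_conv Agg t E f = (if E = {} then \<infinity> else Agg t E f)"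

definition gen_level_measure :: "(real \<Rightarrow> 'a set set) \<Rightarrow> (real \<Rightarrow> 'a set \<Rightarrow> ennreal) \<Rightarrow>
    (real \<Rightarrow> 'a set \<Rightarrow> ('a \<Rightarrow> real) \<Rightarrow> ennreal) \<Rightarrow> ('a \<Rightarrow> real) \<Rightarrow> real \<Rightarrow> ennreal" where
  "gen_level_measure \<E> \<mu> Agg f t = Sup {\<mu> t E | E. E \<in> \<E> t \<and> agg_conv Agg t E f \<ge> ennreal t}"

end

theory Submission
  imports Defs
begin

text \<open>The level measure of any function is a supremum over a subfamily of the paving, so it is
  bounded by the supremum of \<open>\<mu>\<^sub>t\<close> over the whole paving; when that supremum is attained at a set
  \<open>D\<close> which itself passes the level test, both bounds coincide.\<close>

lemma gen_level_measure_le_SUP: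
  "gen_level_measure \<E> \<mu> Agg f t \<le> (SUP E\<in>\<E> t. \<mu> t E)"
  unfolding gen_level_measure_def by (auto intro!: Sup_least SUP_upper)

lemma gen_level_measure_ge:
  assumes "E \<in> \<E> t" and "ennreal t \<le> agg_conv Agg t E f"
  shows "\<mu> t E \<le> gen_level_measure \<E> \<mu> Agg f t"
  unfolding gen_level_measure_def using assms by (auto intro!: Sup_upper)

lemma gen_level_measure_eq_attained_SUP:
  assumes "D \<in> \<E> t" and "(SUP E\<in>\<E> t. \<mu> t E) = \<mu> t D"
    and "ennreal t \<le> agg_conv Agg t D f"
  shows "gen_level_measure \<E> \<mu> Agg f t = \<mu> t D"
proof (rule antisym)
  show "gen_level_measure \<E> \<mu> Agg f t \<le> \<mu> t D"
    using gen_level_measure_le_SUP assms(2) by metis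
  show "\<mu> t D \<le> gen_level_measure \<E> \<mu> Agg f t"
    using assms(1,3) by (rule gen_level_measure_ge)
qed

theorem proposition3p10:
  fixes M :: "'a measure" and \<E> :: "real \<Rightarrow> 'a set set"
    and \<mu> :: "real \<Rightarrow> 'a set \<Rightarrow> ennreal"
    and Agg :: "real \<Rightarrow> 'a set \<Rightarrow> ('a \<Rightarrow> real) \<Rightarrow> ennreal"
    and c :: real and D :: "'a set"
  assumes "paving_process M \<E>"
    and "\<forall>t\<ge>0. monotone_measure M (\<mu> t)"
    and "pFCA M \<E> Agg"
    and "c > 0" and "D \<in> sets M"
    and "\<forall>t\<in>{0..c}. D \<in> \<E> t - {{}} \<and> (SUP E\<in>\<E> t. \<mu> t E) = \<mu> t D
            \<and> Agg t D (indicator D) \<ge> ennreal t"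
  shows "\<forall>t\<in>{0..c}. gen_level_measure \<E> \<mu> Agg (indicator D) t = \<mu> t D"
proof
  fix t assume "t \<in> {0..c}"
  with assms(6) have "D \<in> \<E> t" "D \<noteq> {}" "(SUP E\<in>\<E> t. \<mu> t E) = \<mu> t D"
    and "ennreal t \<le> Agg t D (indicator D)" by auto
  then show "gen_level_measure \<E> \<mu> Agg (indicator D) t = \<mu> t D"
    by (intro gen_level_measure_eq_attained_SUP) (simp_all add: agg_conv_def)
qed

end
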